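(* In the setting below (planted submatrix signal), if the multigraph $\alpha\in\mathbb{N}^{N}$ has a connected component containing at least one edge that does not contain vertex $1$, then $\kappa_\alpha=0$. In particular $\kappa_\alpha=0$ whenever $\alpha$ is disconnected.
   Context: Let $n\ge1$, $\lambda\ge0$, $\rho\in(0,1)$, $v\in\{0,1\}^n$ with i.i.d. $\mathrm{Bernoulli}(\rho)$ entries, $N=n(n+1)/2$ indexed by pairs $(i,j)$ with $1\le i\le j\le n$, $X_{ij}=\lambda v_iv_j$, and $x=v_1$. An index $\alpha=(\alpha_{ij})_{i\le j}\in\mathbb{N}^N$ is viewed as a multigraph on vertex set $[n]$ (self-loops allowed) with $\alpha_{ij}$ edges between $i$ and $j$; $|\alpha|$ is its number of edges and $V(\alpha)$ the set of vertices spanned by its edges. $\kappa_\alpha$ is defined recursively by $\kappa_\alpha=\mathbb{E}[xX^\alpha]-\sum_{0\le\beta\lneq\alpha}\kappa_\beta\binom{\alpha}{\beta}\mathbb{E}[X^{\alpha-\beta}]$, with multi-index notation $X^\alpha=\prod X_{ij}^{\alpha_{ij}}$, $\binom{\alpha}{\beta}=\prod\binom{\alpha_{ij}}{\beta_{ij}}$, $\beta\le\alpha$ entrywise, $\beta\lneq\alpha$ meaning $\beta\le\alpha$, $\beta\ne\alpha$. *)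

theory Defs
  imports "HOL-Probability.Probability"
begin

text \<open>The random vector v in {0,1}^n with i.i.d. Bernoulli(rho) entries, encoded as
  v :: nat => bool on the index set {1..n} (v i = True means v_i = 1).\<close>
definition vdist :: "nat \<Rightarrow> real \<Rightarrow> (nat \<Rightarrow> bool) pmf" where
  "vdist n \<rho> = Pi_pmf {1..n} False (\<lambda>_. bernoulli_pmf \<rho>)"

definition Ev :: "nat \<Rightarrow> real \<Rightarrow> ((nat \<Rightarrow> bool) \<Rightarrow> real) \<Rightarrow> real" where
  "Ev n \<rho> f = measure_pmf.expectation (vdist n \<rho>) f"

definition Pairs :: "nat \<Rightarrow> (nat \<times> nat) set" where
  "Pairs n = {(i, j). 1 \<le> i \<and> i \<le> j \<and> j \<le> n}"

definition Xent :: "real \<Rightarrow> (nat \<Rightarrow> bool) \<Rightarrow> nat \<times> nat \<Rightarrow> real" where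
  "Xent lam v p = lam * of_bool (v (fst p)) * of_bool (v (snd p))"

definition xsig :: "(nat \<Rightarrow> bool) \<Rightarrow> real" where
  "xsig v = of_bool (v 1)"

text \<open>Multi-indices alpha in N^N are represented as multisets of pairs (multigraphs):
  alpha_ij = count alpha (i,j).  X^alpha and binomial(alpha,beta):\<close>
definition Xpow :: "real \<Rightarrow> (nat \<Rightarrow> bool) \<Rightarrow> (nat \<times> nat) multiset \<Rightarrow> real" where
  "Xpow lam v \<alpha> = (\<Prod>p\<in>set_mset \<alpha>. Xent lam v p ^ count \<alpha> p)"

definition mbinom :: "(nat \<times> nat) multiset \<Rightarrow> (nat \<times> nat) multiset \<Rightarrow> real" where
  "mbinom \<alpha> \<beta> = (\<Prod>p\<in>set_mset \<alpha>. real (count \<alpha> p choose count \<beta> p))"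

function kappa :: "nat \<Rightarrow> real \<Rightarrow> real \<Rightarrow> (nat \<times> nat) multiset \<Rightarrow> real" where
  "kappa n lam \<rho> \<alpha> =
     Ev n \<rho> (\<lambda>v. xsig v * Xpow lam v \<alpha>)
     - (\<Sum>\<beta>\<in>{\<beta>. \<beta> \<subset># \<alpha>}. kappa n lam \<rho> \<beta> * mbinom \<alpha> \<beta> * Ev n \<rho> (\<lambda>v. Xpow lam v (\<alpha> - \<beta>)))"
  by auto
termination
  by (relation "Wellfounded.measure (\<lambda>(n, lam, \<rho>, \<alpha>). size \<alpha>)") (auto intro: mset_subset_size)

definition adj :: "(nat \<times> nat) multiset \<Rightarrow> nat \<Rightarrow> nat \<Rightarrow> bool" where
  "adj \<alpha> u w \<longleftrightarrow> (u, w) \<in># \<alpha> \<or> (w, u) \<in># \<alpha>"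

definition conn :: "(nat \<times> nat) multiset \<Rightarrow> nat \<Rightarrow> nat \<Rightarrow> bool" where
  "conn \<alpha> = (adj \<alpha>)\<^sup>*\<^sup>*"

definition verts :: "(nat \<times> nat) multiset \<Rightarrow> nat set" where
  "verts \<alpha> = fst ` set_mset \<alpha> \<union> snd ` set_mset \<alpha>"

definition has_comp_without_1 :: "(nat \<times> nat) multiset \<Rightarrow> bool" where
  "has_comp_without_1 \<alpha> \<longleftrightarrow> (\<exists>e\<in>#\<alpha>. \<not> conn \<alpha> (fst e) 1)"

definition disconnected :: "(nat \<times> nat) multiset \<Rightarrow> bool" where
  "disconnected \<alpha> \<longleftrightarrow> (\<exists>u\<in>verts \<alpha>. \<exists>w\<in>verts \<alpha>. \<not> conn \<alpha> u w)"

end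

theory Submission imports Defs begin

(* Each moment X^a equals lam^|a| times the indicator that v is 1 on all vertices of a, so
   its expectation is rho^(number of vertices). If a splits as g + d with d vertex-disjoint from
   g and from vertex 1, these expectations factor over g and d. In the moment expansion
   E[x X^a] = sum over b <= a of kappa_b binom(a,b) E[X^(a-b)], the terms with b <= g then add
   up to E[X^d] E[x X^g] = E[x X^a], while by induction every other b <> a meets d and has
   kappa_b = 0; hence kappa_a = 0. For the theorem, d collects the components avoiding 1. *)

declare kappa.simps[simp del]

definition ind_all :: "nat set \<Rightarrow> (nat \<Rightarrow> bool) \<Rightarrow> real" where
  "ind_all A v = of_bool (\<forall>i\<in>A. v i)"

lemma prod_of_bool:
  "finite S \<Longrightarrow> (\<Prod>i\<in>S. (of_bool (P i) :: 'a :: comm_semiring_1)) = of_bool (\<forall>i\<in>S. P i)"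
  by (induction S rule: finite_induct) auto

lemma Ev_mult_left: "Ev n \<rho> (\<lambda>v. c * f v) = c * Ev n \<rho> f"
  unfolding Ev_def by simp

lemma Ev_ind_all:
  assumes "finite A" "0 \<le> \<rho>" "\<rho> \<le> 1"
  shows "Ev n \<rho> (ind_all A) = of_bool (A \<subseteq> {1..n}) * \<rho> ^ card A"
proof -
  let ?f = "\<lambda>i b. if i \<in> A then (of_bool b :: real) else 1"
  have "Ev n \<rho> (ind_all A) = Ev n \<rho> (\<lambda>v. of_bool (A \<subseteq> {1..n}) * (\<Prod>i\<in>{1..n}. ?f i (v i)))"
    unfolding Ev_def
  proof (rule integral_cong_AE)
    show "AE v in measure_pmf (vdist n \<rho>).
            ind_all A v = of_bool (A \<subseteq> {1..n}) * (\<Prod>i\<in>{1..n}. ?f i (v i))"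
    proof (rule AE_pmfI)
      fix v assume "v \<in> set_pmf (vdist n \<rho>)"
      then have outside: "\<And>i. i \<notin> {1..n} \<Longrightarrow> \<not> v i"
        using set_Pi_pmf_subset[of "{1..n}" False "\<lambda>_. bernoulli_pmf \<rho>"] unfolding vdist_def by auto
      show "ind_all A v = of_bool (A \<subseteq> {1..n}) * (\<Prod>i\<in>{1..n}. ?f i (v i))"
      proof (cases "A \<subseteq> {1..n}")
        case True
        have "(\<Prod>i\<in>{1..n}. ?f i (v i)) = (\<Prod>i\<in>{1..n}. of_bool (i \<in> A \<longrightarrow> v i))"
          by (intro prod.cong) auto
        also have "\<dots> = of_bool (\<forall>i\<in>{1..n}. i \<in> A \<longrightarrow> v i)"
          by (simp add: prod_of_bool)
        finally show ?thesis
          using True unfolding ind_all_def by auto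
      next
        case False
        then obtain i where "i \<in> A" "i \<notin> {1..n}" by blast
        then show ?thesis using outside[of i] False unfolding ind_all_def by auto
      qed
    qed
  qed auto
  also have "\<dots> = of_bool (A \<subseteq> {1..n}) *
                   (\<Prod>i\<in>{1..n}. measure_pmf.expectation (bernoulli_pmf \<rho>) (?f i))"
    unfolding Ev_def vdist_def
    by (subst integral_mult_right_zero, subst expectation_prod_Pi_pmf)
       (auto simp: integrable_measure_pmf_finite)
  also have "\<dots> = of_bool (A \<subseteq> {1..n}) * (\<Prod>i\<in>{1..n}. if i \<in> A then \<rho> else 1)"
    using assms by (intro arg_cong2[where f="(*)"] refl prod.cong) auto
  also have "\<dots> = of_bool (A \<subseteq> {1..n}) * \<rho> ^ card A"
    by (cases "A \<subseteq> {1..n}") (auto simp: prod.If_cases Int_absorb1)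
  finally show ?thesis .
qed

lemma Ev_ind_all_Un_disjoint:
  assumes "finite A" "finite B" "A \<inter> B = {}" "0 \<le> \<rho>" "\<rho> \<le> 1"
  shows "Ev n \<rho> (ind_all (A \<union> B)) = Ev n \<rho> (ind_all A) * Ev n \<rho> (ind_all B)"
  using assms by (simp add: Ev_ind_all card_Un_disjoint power_add)

lemma finite_submultisets: "finite {\<beta>. \<beta> \<subseteq># \<alpha>}"
proof -
  have "{\<beta>. \<beta> \<subseteq># \<alpha>} \<subseteq> mset ` {xs. set xs \<subseteq> set_mset \<alpha> \<and> length xs \<le> size \<alpha>}"
  proof
    fix \<beta> assume "\<beta> \<in> {\<beta>. \<beta> \<subseteq># \<alpha>}"
    then have "\<beta> \<subseteq># \<alpha>" by simp
    moreover obtain xs where "mset xs = \<beta>" using ex_mset by blast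
    ultimately show "\<beta> \<in> mset ` {xs. set xs \<subseteq> set_mset \<alpha> \<and> length xs \<le> size \<alpha>}"
      using set_mset_mono size_mset_mono by force
  qed
  moreover have "finite {xs. set xs \<subseteq> set_mset \<alpha> \<and> length xs \<le> size \<alpha>}"
    by (rule finite_lists_length_le) simp
  ultimately show ?thesis by (meson finite_surj)
qed

lemma finite_strict_submultisets: "finite {\<beta>. \<beta> \<subset># \<alpha>}"
  by (rule finite_subset[OF _ finite_submultisets[of \<alpha>]]) auto

lemma verts_empty [simp]: "verts {#} = {}"
  unfolding verts_def by auto

lemma verts_add_mset: "verts (add_mset p \<alpha>) = {fst p, snd p} \<union> verts \<alpha>"
  unfolding verts_def by auto

lemma verts_union: "verts (\<alpha> + \<beta>) = verts \<alpha> \<union> verts \<beta>"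
  unfolding verts_def by auto

lemma finite_verts [simp]: "finite (verts \<alpha>)"
  unfolding verts_def by auto

lemma verts_mono: "\<beta> \<subseteq># \<alpha> \<Longrightarrow> verts \<beta> \<subseteq> verts \<alpha>"
  unfolding verts_def using set_mset_mono by blast

lemma Xpow_eq_prod_mset: "Xpow lam v \<alpha> = prod_mset (image_mset (Xent lam v) \<alpha>)"
  unfolding Xpow_def by (simp add: image_prod_mset_multiplicity)

lemma Xpow_eq_ind_all: "Xpow lam v \<alpha> = lam ^ size \<alpha> * ind_all (verts \<alpha>) v"
proof (induction \<alpha>)
  case empty
  then show ?case by (simp add: Xpow_def ind_all_def)
next
  case (add p \<alpha>)
  have "Xpow lam v (add_mset p \<alpha>) = Xent lam v p * Xpow lam v \<alpha>"
    by (simp add: Xpow_eq_prod_mset)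
  then show ?case using add by (simp add: verts_add_mset ind_all_def Xent_def)
qed

lemma xsig_eq_ind_all: "xsig = ind_all {1}"
  unfolding xsig_def ind_all_def by auto

lemma Ev_Xpow_empty [simp]: "Ev n \<rho> (\<lambda>v. Xpow lam v {#}) = 1"
  unfolding Ev_def Xpow_def by simp

lemma mbinom_self [simp]: "mbinom \<alpha> \<alpha> = 1"
  unfolding mbinom_def by simp

lemma mbinom_add_disjoint:
  assumes "\<beta> \<subseteq># \<gamma>" "set_mset \<gamma> \<inter> set_mset \<delta> = {}"
  shows "mbinom (\<gamma> + \<delta>) \<beta> = mbinom \<gamma> \<beta>"
proof -
  have \<delta>_factor: "real (count (\<gamma> + \<delta>) p choose count \<beta> p) = 1" if "p \<in># \<delta>" for p
    using that assms by (metis IntI count_inI empty_iff mset_subset_eqD binomial_n_0 of_nat_1)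
  have \<gamma>_factor: "count (\<gamma> + \<delta>) p = count \<gamma> p" if "p \<in># \<gamma>" for p
    using that assms(2) by (auto simp: not_in_iff[symmetric])
  have "mbinom (\<gamma> + \<delta>) \<beta> = (\<Prod>p\<in>set_mset \<gamma>. real (count (\<gamma> + \<delta>) p choose count \<beta> p)) *
                              (\<Prod>p\<in>set_mset \<delta>. real (count (\<gamma> + \<delta>) p choose count \<beta> p))"
    using assms(2) unfolding mbinom_def by (simp add: prod.union_disjoint)
  also have "\<dots> = mbinom \<gamma> \<beta>"
    unfolding mbinom_def using \<delta>_factor \<gamma>_factor by simp
  finally show ?thesis .
qed

lemma Ev_xsig_Xpow_eq_sum_kappa:
  "Ev n \<rho> (\<lambda>v. xsig v * Xpow lam v \<alpha>) =
   (\<Sum>\<beta> | \<beta> \<subseteq># \<alpha>. kappa n lam \<rho> \<beta> * mbinom \<alpha> \<beta> * Ev n \<rho> (\<lambda>v. Xpow lam v (\<alpha> - \<beta>)))"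
proof -
  have "{\<beta>. \<beta> \<subseteq># \<alpha>} = insert \<alpha> {\<beta>. \<beta> \<subset># \<alpha>}" by auto
  then show ?thesis
    using finite_strict_submultisets[of \<alpha>] by (simp add: kappa.simps[of n lam \<rho> \<alpha>])
qed

lemma Ev_ind_all_Xpow_add_separated:
  assumes "verts \<delta> \<inter> (S \<union> verts \<gamma>) = {}" "finite S" "0 \<le> \<rho>" "\<rho> \<le> 1"
  shows "Ev n \<rho> (\<lambda>v. ind_all S v * Xpow lam v (\<gamma> + \<delta>)) =
         Ev n \<rho> (\<lambda>v. ind_all S v * Xpow lam v \<gamma>) * Ev n \<rho> (\<lambda>v. Xpow lam v \<delta>)"
proof -
  have ind_all_Un: "ind_all A v * ind_all B v = ind_all (A \<union> B) v" for A B v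
    unfolding ind_all_def by auto
  have "ind_all S v * Xpow lam v (\<gamma> + \<delta>) =
        lam ^ size \<gamma> * lam ^ size \<delta> * ind_all ((S \<union> verts \<gamma>) \<union> verts \<delta>) v" for v
    by (simp add: Xpow_eq_ind_all verts_union power_add mult_ac flip: ind_all_Un)
  then have "Ev n \<rho> (\<lambda>v. ind_all S v * Xpow lam v (\<gamma> + \<delta>)) =
        lam ^ size \<gamma> * lam ^ size \<delta> * Ev n \<rho> (ind_all ((S \<union> verts \<gamma>) \<union> verts \<delta>))"
    by (simp add: Ev_mult_left)
  also have "\<dots> = lam ^ size \<gamma> * Ev n \<rho> (ind_all (S \<union> verts \<gamma>)) *
                   (lam ^ size \<delta> * Ev n \<rho> (ind_all (verts \<delta>)))"
    using assms by (simp add: Ev_ind_all_Un_disjoint Int_commute)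
  also have "\<dots> = Ev n \<rho> (\<lambda>v. ind_all S v * Xpow lam v \<gamma>) * Ev n \<rho> (\<lambda>v. Xpow lam v \<delta>)"
  proof -
    have "ind_all S v * Xpow lam v \<gamma> = lam ^ size \<gamma> * ind_all (S \<union> verts \<gamma>) v" for v
      by (simp add: Xpow_eq_ind_all mult.left_commute ind_all_Un)
    then have "Ev n \<rho> (\<lambda>v. ind_all S v * Xpow lam v \<gamma>) =
               lam ^ size \<gamma> * Ev n \<rho> (ind_all (S \<union> verts \<gamma>))"
      by (simp only: Ev_mult_left)
    moreover have "Ev n \<rho> (\<lambda>v. Xpow lam v \<delta>) = lam ^ size \<delta> * Ev n \<rho> (ind_all (verts \<delta>))"
      by (simp add: Xpow_eq_ind_all Ev_mult_left)
    ultimately show ?thesis by simp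
  qed
  finally show ?thesis .
qed

lemma sum_kappa_over_separated_part:
  assumes sep: "verts \<delta> \<inter> insert 1 (verts \<gamma>) = {}" and "0 \<le> \<rho>" "\<rho> \<le> 1"
  shows "(\<Sum>\<beta> | \<beta> \<subseteq># \<gamma>. kappa n lam \<rho> \<beta> * mbinom (\<gamma> + \<delta>) \<beta> * Ev n \<rho> (\<lambda>v. Xpow lam v (\<gamma> + \<delta> - \<beta>)))
         = Ev n \<rho> (\<lambda>v. xsig v * Xpow lam v (\<gamma> + \<delta>))"
proof -
  have edges_disjoint: "set_mset \<gamma> \<inter> set_mset \<delta> = {}"
    using sep unfolding verts_def by force
  have term_factor:
    "kappa n lam \<rho> \<beta> * mbinom (\<gamma> + \<delta>) \<beta> * Ev n \<rho> (\<lambda>v. Xpow lam v (\<gamma> + \<delta> - \<beta>)) =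
     Ev n \<rho> (\<lambda>v. Xpow lam v \<delta>) * (kappa n lam \<rho> \<beta> * mbinom \<gamma> \<beta> * Ev n \<rho> (\<lambda>v. Xpow lam v (\<gamma> - \<beta>)))"
    if "\<beta> \<subseteq># \<gamma>" for \<beta>
  proof -
    have "\<gamma> + \<delta> - \<beta> = (\<gamma> - \<beta>) + \<delta>"
      using that by (rule subset_mset.diff_add_assoc2)
    moreover have "verts \<delta> \<inter> ({} \<union> verts (\<gamma> - \<beta>)) = {}"
      using sep verts_mono[of "\<gamma> - \<beta>" \<gamma>] by auto
    ultimately show ?thesis
      using Ev_ind_all_Xpow_add_separated[of \<delta> "{}" "\<gamma> - \<beta>" \<rho> n lam] assms(2,3)
        mbinom_add_disjoint[OF that edges_disjoint]
      by (simp add: ind_all_def)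
  qed
  have "verts \<delta> \<inter> ({1} \<union> verts \<gamma>) = {}"
    using sep by auto
  then have "Ev n \<rho> (\<lambda>v. xsig v * Xpow lam v (\<gamma> + \<delta>)) =
             Ev n \<rho> (\<lambda>v. Xpow lam v \<delta>) * Ev n \<rho> (\<lambda>v. xsig v * Xpow lam v \<gamma>)"
    using Ev_ind_all_Xpow_add_separated[of \<delta> "{1}" \<gamma> \<rho> n lam] assms(2,3)
    by (simp add: xsig_eq_ind_all)
  then show ?thesis
    by (simp add: term_factor sum_distrib_left[symmetric] Ev_xsig_Xpow_eq_sum_kappa[of n \<rho> lam \<gamma>])
qed

lemma kappa_eq_0_if_separated:
  assumes "1 \<notin> T" and "\<forall>p\<in>#\<alpha>. fst p \<in> T \<longleftrightarrow> snd p \<in> T" and "\<exists>p\<in>#\<alpha>. fst p \<in> T"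
    and "0 \<le> \<rho>" "\<rho> \<le> 1"
  shows "kappa n lam \<rho> \<alpha> = 0"
  using assms(2,3)
proof (induction \<alpha> rule: full_multiset_induct)
  case (less \<alpha>)
  define \<gamma> where "\<gamma> = filter_mset (\<lambda>p. fst p \<notin> T) \<alpha>"
  define \<delta> where "\<delta> = filter_mset (\<lambda>p. fst p \<in> T) \<alpha>"
  let ?term = "\<lambda>\<beta>. kappa n lam \<rho> \<beta> * mbinom \<alpha> \<beta> * Ev n \<rho> (\<lambda>v. Xpow lam v (\<alpha> - \<beta>))"
  let ?S = "{\<beta>. \<beta> \<subseteq># \<alpha>}" and ?S\<gamma> = "{\<beta>. \<beta> \<subseteq># \<gamma>}"
  have \<alpha>_split: "\<alpha> = \<gamma> + \<delta>"
    unfolding \<gamma>_def \<delta>_def by (subst add.commute) (rule multiset_partition)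
  have \<gamma>_sub: "\<gamma> \<subseteq># \<alpha>" and "\<delta> \<noteq> {#}"
    using less.prems(2) unfolding \<gamma>_def \<delta>_def by (auto simp: filter_empty_mset)
  then have \<alpha>_notin: "\<alpha> \<notin> ?S\<gamma>"
    using \<alpha>_split by (auto dest: subset_mset.antisym)
  have "verts \<delta> \<subseteq> T" and "verts \<gamma> \<inter> T = {}"
    using less.prems(1) unfolding \<gamma>_def \<delta>_def verts_def by auto
  then have sep: "verts \<delta> \<inter> insert 1 (verts \<gamma>) = {}"
    using assms(1) by blast
  have vanish: "?term \<beta> = 0" if "\<beta> \<in> ?S - ?S\<gamma> - {\<alpha>}" for \<beta>
  proof -
    have "\<beta> \<subset># \<alpha>" and not_sub: "\<not> \<beta> \<subseteq># \<gamma>" using that by auto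
    have "\<exists>p\<in>#\<beta>. fst p \<in> T"
    proof (rule ccontr)
      assume "\<not> (\<exists>p\<in>#\<beta>. fst p \<in> T)"
      then have "filter_mset (\<lambda>p. fst p \<notin> T) \<beta> = \<beta>"
        by (subst filter_mset_eq_conv) auto
      moreover have "filter_mset (\<lambda>p. fst p \<notin> T) \<beta> \<subseteq># \<gamma>"
        unfolding \<gamma>_def using \<open>\<beta> \<subset># \<alpha>\<close> by (intro multiset_filter_mono) simp
      ultimately show False using not_sub by simp
    qed
    moreover have "\<forall>p\<in>#\<beta>. fst p \<in> T \<longleftrightarrow> snd p \<in> T"
      using less.prems(1) \<open>\<beta> \<subset># \<alpha>\<close> by (meson mset_subset_eqD subset_mset.less_imp_le)
    ultimately show ?thesis using less.IH \<open>\<beta> \<subset># \<alpha>\<close> by simp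
  qed
  have "sum ?term (?S - ?S\<gamma>) = ?term \<alpha> + sum ?term (?S - ?S\<gamma> - {\<alpha>})"
    using \<alpha>_notin finite_submultisets[of \<alpha>] by (intro sum.remove) auto
  also have "sum ?term (?S - ?S\<gamma> - {\<alpha>}) = 0"
    using vanish by (intro sum.neutral) blast
  finally have "sum ?term (?S - ?S\<gamma>) = kappa n lam \<rho> \<alpha>"
    by simp
  moreover have "?S\<gamma> \<subseteq> ?S"
    using \<gamma>_sub by (auto intro: subset_mset.order_trans)
  ultimately have "sum ?term ?S = sum ?term ?S\<gamma> + kappa n lam \<rho> \<alpha>"
    using sum.subset_diff[OF _ finite_submultisets, of ?S\<gamma> \<alpha> ?term] by simp
  also have "sum ?term ?S\<gamma> = Ev n \<rho> (\<lambda>v. xsig v * Xpow lam v \<alpha>)"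
    unfolding \<alpha>_split by (rule sum_kappa_over_separated_part[OF sep assms(4,5)])
  finally show ?case
    by (simp add: Ev_xsig_Xpow_eq_sum_kappa[of n \<rho> lam \<alpha>])
qed

lemma conn_sym: "conn \<alpha> a b \<Longrightarrow> conn \<alpha> b a"
  unfolding conn_def
  by (induction rule: rtranclp_induct) (auto simp: adj_def intro: converse_rtranclp_into_rtranclp)

lemma conn_trans: "conn \<alpha> a b \<Longrightarrow> conn \<alpha> b c \<Longrightarrow> conn \<alpha> a c"
  unfolding conn_def by (rule rtranclp_trans)

lemma conn_edge: "p \<in># \<alpha> \<Longrightarrow> conn \<alpha> (fst p) (snd p)"
  unfolding conn_def adj_def by (intro r_into_rtranclp) (cases p, auto)

lemma kappa_eq_0_if_has_comp_without_1:
  assumes "has_comp_without_1 \<alpha>" "0 \<le> \<rho>" "\<rho> \<le> 1"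
  shows "kappa n lam \<rho> \<alpha> = 0"
proof (rule kappa_eq_0_if_separated[where T = "{u. \<not> conn \<alpha> u 1}"])
  show "1 \<notin> {u. \<not> conn \<alpha> u 1}"
    unfolding conn_def by simp
  show "\<forall>p\<in>#\<alpha>. fst p \<in> {u. \<not> conn \<alpha> u 1} \<longleftrightarrow> snd p \<in> {u. \<not> conn \<alpha> u 1}"
    using conn_edge conn_sym conn_trans by blast
  show "\<exists>p\<in>#\<alpha>. fst p \<in> {u. \<not> conn \<alpha> u 1}"
    using assms(1) unfolding has_comp_without_1_def by simp
qed (use assms in auto)

lemma disconnected_imp_has_comp_without_1:
  assumes "disconnected \<alpha>"
  shows "has_comp_without_1 \<alpha>"
proof -
  obtain u w where "u \<in> verts \<alpha>" "w \<in> verts \<alpha>" "\<not> conn \<alpha> u w"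
    using assms unfolding disconnected_def by blast
  then obtain x where "x \<in> verts \<alpha>" "\<not> conn \<alpha> x 1"
    using conn_sym conn_trans by blast
  then obtain p where "p \<in># \<alpha>" "x = fst p \<or> x = snd p"
    unfolding verts_def by auto
  then show ?thesis
    using \<open>\<not> conn \<alpha> x 1\<close> conn_edge conn_trans conn_sym unfolding has_comp_without_1_def by blast
qed

theorem mainTheorem5:
  fixes n :: nat and lam \<rho> :: real and \<alpha> :: "(nat \<times> nat) multiset"
  assumes "n \<ge> 1" and "lam \<ge> 0" and "0 < \<rho>" and "\<rho> < 1"
    and "set_mset \<alpha> \<subseteq> Pairs n"
  shows "(has_comp_without_1 \<alpha> \<longrightarrow> kappa n lam \<rho> \<alpha> = 0)
       \<and> (disconnected \<alpha> \<longrightarrow> kappa n lam \<rho> \<alpha> = 0)"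
  using kappa_eq_0_if_has_comp_without_1 disconnected_imp_has_comp_without_1 assms(3,4) by auto

end
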